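(* Let $\lambda$ be a nonzero real number. For every $n\in\mathbb{N}$ and every real $x$ with $1+\lambda x>0$, \[ \mathrm{Bel}_{n,\lambda}'(x)=\frac{1}{1+\lambda x}\sum_{l=0}^{n-1}\binom{n}{l}\big(\mathrm{Bel}_{l,\lambda}(x)-\lambda\,\mathrm{Bel}_{l+1,\lambda}(x)\big), \] where $\mathrm{Bel}_{n,\lambda}'(x)=\frac{d}{dx}\mathrm{Bel}_{n,\lambda}(x)$.
   Context: For nonzero real $\lambda$, $e_\lambda(x)=(1+\lambda x)^{1/\lambda}$ and $e_\lambda^{-1}(x)=(1+\lambda x)^{-1/\lambda}$. The new type degenerate Bell polynomials $\mathrm{Bel}_{n,\lambda}(x)$ are defined by $e_{\lambda}(xe^{t})\,e_{\lambda}^{-1}(x)=\big(\frac{1+\lambda xe^t}{1+\lambda x}\big)^{1/\lambda}=\sum_{n=0}^{\infty}\mathrm{Bel}_{n,\lambda}(x)\frac{t^{n}}{n!}$ (expansion in powers of $t$). *)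

theory Defs
  imports "HOL-Analysis.Analysis"
begin

text \<open>Generating function of the new type degenerate Bell polynomials:
  e_lam(x e^t) e_lam^{-1}(x) = ((1 + lam x e^t)/(1 + lam x))^(1/lam).\<close>
definition degBel_gf :: "real \<Rightarrow> real \<Rightarrow> real \<Rightarrow> real" where
  "degBel_gf lam x t = ((1 + lam * x * exp t) / (1 + lam * x)) powr (1 / lam)"

text \<open>Bel_{n,lam}(x) is n! times the coefficient of t^n in the expansion in powers of t,
  i.e. the n-th derivative in t at t = 0.\<close>
definition degBel :: "nat \<Rightarrow> real \<Rightarrow> real \<Rightarrow> real" where
  "degBel n lam x = ((deriv ^^ n) (degBel_gf lam x)) 0"

end

theory Submission
  imports Defs "HOL-Combinatorics.Stirling"
begin

text \<open>With r = \<lambda>x/(1 + \<lambda>x) the generating function is (1 - r + r e^t)^(1/\<lambda>), and differentiating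
  it n times in t gives Bel_n(x) = \<Sum>_k S(n,k) (1/\<lambda>)_k r^k, with Stirling numbers of the second kind
  and falling factorials. The recurrence of S together with \<lambda>(1/\<lambda> - k) = 1 - \<lambda>k gives
  Bel_l - \<lambda> Bel_(l+1) = \<lambda>(1 - r) \<Sum>_k S(l,k) (1/\<lambda>)_(k+1) r^k, and the binomial identity
  \<Sum>_(l<n) C(n,l) S(l,k) = (k+1) S(n,k+1) turns the binomial sum of these differences into
  \<lambda>(1 - r) times the r-derivative of the polynomial. As 1 - r = 1/(1 + \<lambda>x) and
  dr/dx = \<lambda>/(1 + \<lambda>x)^2, this is the chain rule.\<close>

definition falling_fact :: "'a::comm_ring_1 \<Rightarrow> nat \<Rightarrow> 'a" where
  "falling_fact c k = (\<Prod>i<k. c - of_nat i)"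

lemma falling_fact_0 [simp]: "falling_fact c 0 = 1"
  by (simp add: falling_fact_def)

lemma falling_fact_Suc: "falling_fact c (Suc k) = falling_fact c k * (c - of_nat k)"
  by (simp add: falling_fact_def)

lemma Stirling_Suc_Suc_eq_sum_binomial:
  "Stirling (Suc n) (Suc k) = (\<Sum>l\<le>n. (n choose l) * Stirling l k)"
proof (induction n arbitrary: k)
  case 0
  then show ?case by (cases k) auto
next
  case (Suc n)
  have split: "(\<Sum>l\<le>Suc n. (Suc n choose l) * Stirling l k) = Stirling 0 k
      + (\<Sum>l\<le>n. (n choose l) * Stirling (Suc l) k) + (\<Sum>l\<le>n. (n choose Suc l) * Stirling (Suc l) k)"
    by (subst sum.atMost_Suc_shift) (simp add: sum.distrib algebra_simps)
  have "Stirling 0 k + (\<Sum>l\<le>n. (n choose Suc l) * Stirling (Suc l) k)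
      = (\<Sum>l\<le>Suc n. (n choose l) * Stirling l k)"
    by (subst sum.atMost_Suc_shift) simp
  also have "\<dots> = Stirling (Suc n) (Suc k)"
    using Suc.IH[of k] by simp
  finally have outer: "Stirling 0 k + (\<Sum>l\<le>n. (n choose Suc l) * Stirling (Suc l) k)
      = Stirling (Suc n) (Suc k)" .
  have inner: "(\<Sum>l\<le>n. (n choose l) * Stirling (Suc l) k) = k * Stirling (Suc n) (Suc k) + Stirling (Suc n) k"
  proof (cases k)
    case (Suc j)
    have "(\<Sum>l\<le>n. (n choose l) * Stirling (Suc l) k)
       = Suc j * (\<Sum>l\<le>n. (n choose l) * Stirling l (Suc j)) + (\<Sum>l\<le>n. (n choose l) * Stirling l j)"
      using Suc by (simp add: sum.distrib sum_distrib_left algebra_simps)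
    then show ?thesis
      using Suc Suc.IH[of "Suc j"] Suc.IH[of j] by simp
  qed simp
  show ?case
    using split outer inner by simp
qed

lemma Suc_mult_Stirling_eq_sum_binomial:
  "Suc k * Stirling n (Suc k) = (\<Sum>l<n. (n choose l) * Stirling l k)"
proof -
  have "Suc k * Stirling n (Suc k) + Stirling n k = (\<Sum>l<n. (n choose l) * Stirling l k) + Stirling n k"
    using Stirling_Suc_Suc_eq_sum_binomial[of n k] by (simp add: lessThan_Suc_atMost[symmetric])
  then show ?thesis by simp
qed

lemma sum_Stirling_falling_fact_Suc:
  fixes c :: "'a::comm_ring_1"
  shows "(\<Sum>k\<le>Suc n. of_nat (Stirling (Suc n) k) * falling_fact c k * X k) =
    (\<Sum>k\<le>n. of_nat (Stirling n k) * falling_fact c k * (of_nat k * X k + (c - of_nat k) * X (Suc k)))"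
proof -
  have "(\<Sum>k\<le>Suc n. of_nat (Stirling (Suc n) k) * falling_fact c k * X k)
      = (\<Sum>k\<le>n. of_nat (Stirling (Suc n) (Suc k)) * falling_fact c (Suc k) * X (Suc k))"
    by (subst sum.atMost_Suc_shift) simp
  also have "\<dots> = (\<Sum>k\<le>n. of_nat (Suc k * Stirling n (Suc k)) * falling_fact c (Suc k) * X (Suc k))
      + (\<Sum>k\<le>n. of_nat (Stirling n k) * falling_fact c k * ((c - of_nat k) * X (Suc k)))"
    by (simp add: falling_fact_Suc sum.distrib[symmetric] algebra_simps)
  also have "(\<Sum>k\<le>n. of_nat (Suc k * Stirling n (Suc k)) * falling_fact c (Suc k) * X (Suc k))
      = (\<Sum>k\<le>Suc n. of_nat (k * Stirling n k) * falling_fact c k * X k)"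
    by (subst sum.atMost_Suc_shift) simp
  also have "\<dots> = (\<Sum>k\<le>n. of_nat (Stirling n k) * falling_fact c k * (of_nat k * X k))"
    by (simp add: algebra_simps)
  finally show ?thesis
    by (simp add: sum.distrib[symmetric] algebra_simps)
qed

lemma has_real_derivative_exp_powr_term:
  fixes a b c :: real
  assumes "b + a * exp t > 0"
  shows "((\<lambda>t. (a * exp t) ^ k * (b + a * exp t) powr (c - real k)) has_real_derivative
     real k * ((a * exp t) ^ k * (b + a * exp t) powr (c - real k)) +
     (c - real k) * ((a * exp t) ^ Suc k * (b + a * exp t) powr (c - real (Suc k)))) (at t)"
  using assms
  by (auto intro!: derivative_eq_intros) (cases k; auto simp: algebra_simps)

lemma higher_deriv_powr_exp:
  fixes a b c :: real
  assumes "b + a * exp t > 0"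
  shows "(deriv ^^ n) (\<lambda>t. (b + a * exp t) powr c) t =
    (\<Sum>k\<le>n. real (Stirling n k) * falling_fact c k * ((a * exp t) ^ k * (b + a * exp t) powr (c - real k)))"
  using assms
proof (induction n arbitrary: t)
  case 0
  then show ?case by simp
next
  case (Suc n)
  define T where "T k t = (a * exp t) ^ k * (b + a * exp t) powr (c - real k)" for k t
  define S where "S = {t. b + a * exp t > 0}"
  have "open S"
    unfolding S_def by (intro open_Collect_less continuous_intros)
  have "((\<lambda>t. \<Sum>k\<le>n. real (Stirling n k) * falling_fact c k * T k t) has_real_derivative
      (\<Sum>k\<le>n. real (Stirling n k) * falling_fact c k * (real k * T k t + (c - real k) * T (Suc k) t))) (at t)"
    unfolding T_def using Suc.prems
    by (intro DERIV_sum DERIV_cmult has_real_derivative_exp_powr_term)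
  then have "((deriv ^^ n) (\<lambda>t. (b + a * exp t) powr c) has_real_derivative
      (\<Sum>k\<le>Suc n. real (Stirling (Suc n) k) * falling_fact c k * T k t)) (at t)"
    unfolding sum_Stirling_falling_fact_Suc
    by (rule has_field_derivative_transform_within_open[OF _ \<open>open S\<close>])
      (use Suc S_def T_def in auto)
  then show ?case
    unfolding T_def by (simp add: DERIV_imp_deriv)
qed

definition degBel_poly :: "'a::comm_ring_1 \<Rightarrow> nat \<Rightarrow> 'a \<Rightarrow> 'a" where
  "degBel_poly c n r = (\<Sum>k\<le>n. of_nat (Stirling n k) * falling_fact c k * r ^ k)"

lemma degBel_eq_degBel_poly:
  assumes "1 + lam * x \<noteq> 0"
  shows "degBel n lam x = degBel_poly (1 / lam) n (lam * x / (1 + lam * x))"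
proof -
  define r where "r = lam * x / (1 + lam * x)"
  have "(1 + lam * x * exp t) / (1 + lam * x) = 1 - r + r * exp t" for t
    using assms by (simp add: r_def field_simps)
  then have "degBel_gf lam x = (\<lambda>t. (1 - r + r * exp t) powr (1 / lam))"
    by (simp add: degBel_gf_def fun_eq_iff)
  then show ?thesis
    using higher_deriv_powr_exp[of "1 - r" r 0 n "1 / lam"]
    by (simp add: degBel_def degBel_poly_def r_def)
qed

lemma has_real_derivative_degBel_poly:
  "(degBel_poly c n has_real_derivative
     (\<Sum>k<n. real (Suc k * Stirling n (Suc k)) * falling_fact c (Suc k) * r ^ k)) (at r)"
proof -
  have "(degBel_poly c n has_real_derivative
      (\<Sum>k<Suc n. real (Stirling n k) * falling_fact c k * (real k * r ^ (k - Suc 0)))) (at r)"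
    unfolding degBel_poly_def lessThan_Suc_atMost
    by (intro DERIV_sum DERIV_cmult DERIV_pow)
  then show ?thesis
    unfolding sum.lessThan_Suc_shift by (simp add: algebra_simps)
qed

lemma degBel_poly_diff:
  fixes c lam r :: "'a::comm_ring_1"
  assumes "lam * c = 1"
  shows "degBel_poly c l r - lam * degBel_poly c (Suc l) r
    = lam * (1 - r) * (\<Sum>k\<le>l. of_nat (Stirling l k) * falling_fact c (Suc k) * r ^ k)"
proof -
  have "degBel_poly c l r - lam * degBel_poly c (Suc l) r
     = (\<Sum>k\<le>l. of_nat (Stirling l k) * falling_fact c k * (r ^ k - lam * (of_nat k * r ^ k + (c - of_nat k) * r ^ Suc k)))"
    unfolding degBel_poly_def sum_Stirling_falling_fact_Suc[of _ c "power r"]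
    by (simp add: sum_distrib_left sum_subtractf[symmetric] algebra_simps)
  also have "\<dots> = (\<Sum>k\<le>l. lam * (1 - r) * (of_nat (Stirling l k) * falling_fact c (Suc k) * r ^ k))"
  proof (intro sum.cong refl)
    fix k
    have lam_c: "lam * (c - of_nat k) = 1 - lam * of_nat k"
      using assms by (simp add: right_diff_distrib)
    have "r ^ k - lam * (of_nat k * r ^ k + (c - of_nat k) * r ^ Suc k)
        = r ^ k - lam * of_nat k * r ^ k - lam * (c - of_nat k) * r ^ Suc k"
      by (simp add: algebra_simps)
    also have "\<dots> = (1 - r) * (lam * (c - of_nat k)) * r ^ k"
      unfolding lam_c by (simp add: algebra_simps)
    finally show "of_nat (Stirling l k) * falling_fact c k * (r ^ k - lam * (of_nat k * r ^ k + (c - of_nat k) * r ^ Suc k))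
      = lam * (1 - r) * (of_nat (Stirling l k) * falling_fact c (Suc k) * r ^ k)"
      by (simp only: falling_fact_Suc mult_ac)
  qed
  finally show ?thesis
    by (simp add: sum_distrib_left)
qed

lemma sum_binomial_degBel_poly_diff:
  fixes c lam r :: "'a::comm_ring_1"
  assumes "lam * c = 1"
  shows "(\<Sum>l<n. of_nat (n choose l) * (degBel_poly c l r - lam * degBel_poly c (Suc l) r))
    = lam * (1 - r) * (\<Sum>k<n. of_nat (Suc k * Stirling n (Suc k)) * falling_fact c (Suc k) * r ^ k)"
proof -
  have extend: "(\<Sum>k\<le>l. of_nat (Stirling l k) * falling_fact c (Suc k) * r ^ k)
      = (\<Sum>k<n. of_nat (Stirling l k) * falling_fact c (Suc k) * r ^ k)" if "l < n" for l
    using that by (intro sum.mono_neutral_left) auto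
  have "(\<Sum>l<n. of_nat (n choose l) * (degBel_poly c l r - lam * degBel_poly c (Suc l) r))
      = (\<Sum>l<n. of_nat (n choose l) * (lam * (1 - r) * (\<Sum>k<n. of_nat (Stirling l k) * falling_fact c (Suc k) * r ^ k)))"
    by (intro sum.cong refl) (simp add: degBel_poly_diff[OF assms] extend)
  also have "\<dots> = lam * (1 - r) * (\<Sum>l<n. \<Sum>k<n. of_nat (n choose l) * of_nat (Stirling l k) * falling_fact c (Suc k) * r ^ k)"
    by (simp add: sum_distrib_left mult_ac)
  also have "\<dots> = lam * (1 - r) * (\<Sum>k<n. of_nat (\<Sum>l<n. (n choose l) * Stirling l k) * falling_fact c (Suc k) * r ^ k)"
    by (subst sum.swap) (simp add: sum_distrib_right)
  finally show ?thesis
    by (simp only: Suc_mult_Stirling_eq_sum_binomial)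
qed

theorem theorem10:
  fixes lam x :: real and n :: nat
  assumes "lam \<noteq> 0" and "1 + lam * x > 0"
  shows "((\<lambda>y. degBel n lam y) has_real_derivative
           (1 / (1 + lam * x)) *
           (\<Sum>l<n. real (n choose l) * (degBel l lam x - lam * degBel (Suc l) lam x)))
         (at x)"
proof -
  define r where "r y = lam * y / (1 + lam * y)" for y
  define D where "D = (\<Sum>k<n. real (Suc k * Stirling n (Suc k)) * falling_fact (1 / lam) (Suc k) * r x ^ k)"
  have "(r has_real_derivative lam / (1 + lam * x)\<^sup>2) (at x)"
    unfolding r_def using assms(2)
    by (auto intro!: derivative_eq_intros simp: power2_eq_square field_simps)
  then have "((\<lambda>y. degBel_poly (1 / lam) n (r y)) has_real_derivative D * (lam / (1 + lam * x)\<^sup>2)) (at x)"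
    unfolding D_def by (rule DERIV_chain2[OF has_real_derivative_degBel_poly])
  moreover have "open {y. 1 + lam * y > (0::real)}"
    by (intro open_Collect_less continuous_intros)
  ultimately have "((\<lambda>y. degBel n lam y) has_real_derivative D * (lam / (1 + lam * x)\<^sup>2)) (at x)"
    by (rule has_field_derivative_transform_within_open) (use assms(2) in \<open>auto simp: degBel_eq_degBel_poly r_def\<close>)
  moreover have "(\<Sum>l<n. real (n choose l) * (degBel l lam x - lam * degBel (Suc l) lam x))
      = lam * (1 - r x) * D"
    using assms sum_binomial_degBel_poly_diff[of lam "1 / lam" n "r x"]
    by (simp add: degBel_eq_degBel_poly r_def D_def)
  moreover have "1 - r x = 1 / (1 + lam * x)"
    using assms(2) by (simp add: r_def field_simps)
  ultimately show ?thesis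
    by (simp add: power2_eq_square field_simps)
qed

end
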